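(* Let $G$ be a Polish group with a comeagre conjugacy class $C$. Then every element $g\in C$ is conjugate in $G$ to $g^{-1}$. *)

theory Defs
  imports "HOL-Analysis.Analysis" "HOL-Algebra.Group"
begin

definition topological_group :: "('a, 'b) monoid_scheme \<Rightarrow> 'a topology \<Rightarrow> bool" where
  "topological_group G T \<longleftrightarrow> group G \<and> topspace T = carrier G
     \<and> continuous_map (prod_topology T T) T (\<lambda>(x, y). x \<otimes>\<^bsub>G\<^esub> y)
     \<and> continuous_map T T (\<lambda>x. inv\<^bsub>G\<^esub> x)"

definition polish_group :: "('a, 'b) monoid_scheme \<Rightarrow> 'a topology \<Rightarrow> bool" where
  "polish_group G T \<longleftrightarrow> topological_group G T \<and> completely_metrizable_space T \<and> separable_space T"

definition nowhere_dense_in :: "'a topology \<Rightarrow> 'a set \<Rightarrow> bool" where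
  "nowhere_dense_in T S \<longleftrightarrow> S \<subseteq> topspace T \<and> T interior_of (T closure_of S) = {}"

definition meagre_in :: "'a topology \<Rightarrow> 'a set \<Rightarrow> bool" where
  "meagre_in T S \<longleftrightarrow> (\<exists>\<F>. countable \<F> \<and> (\<forall>N\<in>\<F>. nowhere_dense_in T N) \<and> S \<subseteq> \<Union>\<F>)"

definition comeagre_in :: "'a topology \<Rightarrow> 'a set \<Rightarrow> bool" where
  "comeagre_in T S \<longleftrightarrow> S \<subseteq> topspace T \<and> meagre_in T (topspace T - S)"

definition conj_class :: "('a, 'b) monoid_scheme \<Rightarrow> 'a \<Rightarrow> 'a set" where
  "conj_class G g = {h \<otimes>\<^bsub>G\<^esub> g \<otimes>\<^bsub>G\<^esub> inv\<^bsub>G\<^esub> h | h. h \<in> carrier G}"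

end

theory Submission
  imports Defs
begin

text \<open>Inversion is a homeomorphism of G mapping the conjugacy class of c onto that of c\<inverse>,
  so the latter is comeagre as well. Two comeagre sets of a Baire space meet, and
  conjugacy classes that meet coincide; hence c\<inverse> is conjugate to c, and then so is
  g\<inverse> to g for every conjugate g of c.\<close>

lemma nowhere_dense_in_homeomorphic_image:
  assumes f: "homeomorphic_map X Y f" and N: "nowhere_dense_in X N"
  shows "nowhere_dense_in Y (f ` N)"
proof -
  have sub: "N \<subseteq> topspace X" and empty: "X interior_of (X closure_of N) = {}"
    using N unfolding nowhere_dense_in_def by auto
  have "f ` N \<subseteq> topspace Y"
    using sub homeomorphic_imp_surjective_map[OF f] by blast
  moreover have "Y interior_of (Y closure_of (f ` N)) = {}"
    using empty homeomorphic_map_closure_of[OF f sub]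
      homeomorphic_map_interior_of[OF f closure_of_subset_topspace] by simp
  ultimately show ?thesis
    unfolding nowhere_dense_in_def by simp
qed

lemma meagre_in_homeomorphic_image:
  assumes f: "homeomorphic_map X Y f" and "meagre_in X A"
  shows "meagre_in Y (f ` A)"
proof -
  obtain \<F> where "countable \<F>" "\<forall>N\<in>\<F>. nowhere_dense_in X N" "A \<subseteq> \<Union>\<F>"
    using \<open>meagre_in X A\<close> unfolding meagre_in_def by blast
  moreover have "f ` A \<subseteq> \<Union>((`) f ` \<F>)"
    using \<open>A \<subseteq> \<Union>\<F>\<close> by (auto simp flip: image_Union)
  ultimately show ?thesis
    using nowhere_dense_in_homeomorphic_image[OF f] unfolding meagre_in_def
    by (intro exI[of _ "(`) f ` \<F>"]) auto
qed

lemma comeagre_in_homeomorphic_image: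
  assumes f: "homeomorphic_map X Y f" and S: "comeagre_in X S"
  shows "comeagre_in Y (f ` S)"
proof -
  have sub: "S \<subseteq> topspace X" and "meagre_in X (topspace X - S)"
    using S unfolding comeagre_in_def by auto
  have "meagre_in Y (f ` (topspace X - S))"
    by (rule meagre_in_homeomorphic_image[OF f \<open>meagre_in X (topspace X - S)\<close>])
  moreover have "f ` (topspace X - S) = topspace Y - f ` S"
    using homeomorphic_imp_injective_map[OF f] homeomorphic_imp_surjective_map[OF f] sub
    by (auto simp: inj_on_image_set_diff)
  moreover have "f ` S \<subseteq> topspace Y"
    using sub homeomorphic_imp_surjective_map[OF f] by blast
  ultimately show ?thesis
    unfolding comeagre_in_def by simp
qed

lemma meagre_in_Un:
  assumes "meagre_in X A" "meagre_in X B"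
  shows "meagre_in X (A \<union> B)"
proof -
  obtain \<F> where "countable \<F>" "\<forall>N\<in>\<F>. nowhere_dense_in X N" "A \<subseteq> \<Union>\<F>"
    using assms(1) unfolding meagre_in_def by blast
  moreover obtain \<H> where "countable \<H>" "\<forall>N\<in>\<H>. nowhere_dense_in X N" "B \<subseteq> \<Union>\<H>"
    using assms(2) unfolding meagre_in_def by blast
  ultimately show ?thesis
    unfolding meagre_in_def by (intro exI[of _ "\<F> \<union> \<H>"]) auto
qed

lemma comeagre_in_Int:
  assumes "comeagre_in X S" "comeagre_in X S'"
  shows "comeagre_in X (S \<inter> S')"
proof -
  have "topspace X - S \<inter> S' = (topspace X - S) \<union> (topspace X - S')"
    by blast
  then show ?thesis
    using assms meagre_in_Un unfolding comeagre_in_def by auto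
qed

text \<open>The Baire category theorem: the closures of the members of a countable nowhere
  dense cover are closed with empty interior, so their union has empty interior.\<close>
lemma not_meagre_in_topspace:
  assumes "completely_metrizable_space X" "topspace X \<noteq> {}"
  shows "\<not> meagre_in X (topspace X)"
proof
  assume "meagre_in X (topspace X)"
  then obtain \<F> where \<F>: "countable \<F>" "\<forall>N\<in>\<F>. nowhere_dense_in X N" "topspace X \<subseteq> \<Union>\<F>"
    unfolding meagre_in_def by blast
  let ?\<G> = "(\<lambda>N. X closure_of N) ` \<F>"
  have "X interior_of \<Union>?\<G> = {}"
  proof (rule Baire_category_alt)
    show "completely_metrizable_space X \<or> locally_compact_space X \<and> regular_space X"
      using assms(1) ..
    show "countable ?\<G>"
      using \<F>(1) by simp
    show "closedin X T \<and> X interior_of T = {}" if "T \<in> ?\<G>" for T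
    proof -
      from \<open>T \<in> ?\<G>\<close> obtain N where "N \<in> \<F>" and T: "T = X closure_of N"
        by blast
      then have "X interior_of T = {}"
        using \<F>(2) unfolding nowhere_dense_in_def by simp
      then show ?thesis
        using T by simp
    qed
  qed
  moreover have "\<Union>?\<G> = topspace X"
  proof
    show "\<Union>?\<G> \<subseteq> topspace X"
      by (simp add: UN_subset_iff closure_of_subset_topspace)
    show "topspace X \<subseteq> \<Union>?\<G>"
    proof
      fix x assume "x \<in> topspace X"
      then obtain N where N: "N \<in> \<F>" "x \<in> N"
        using \<F>(3) by blast
      have "N \<subseteq> topspace X"
        using \<F>(2) N(1) unfolding nowhere_dense_in_def by simp
      then have "x \<in> X closure_of N"
        using N(2) closure_of_subset by blast
      then show "x \<in> \<Union>?\<G>"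
        by (rule UN_I[OF N(1)])
    qed
  qed
  ultimately show False
    using assms(2) by simp
qed

lemma comeagre_in_nonempty:
  assumes "completely_metrizable_space X" "topspace X \<noteq> {}" "comeagre_in X S"
  shows "S \<noteq> {}"
proof
  assume "S = {}"
  then have "meagre_in X (topspace X)"
    using assms(3) unfolding comeagre_in_def by simp
  then show False
    using not_meagre_in_topspace assms(1,2) by blast
qed

lemma topological_group_homeomorphic_map_inv:
  assumes "topological_group G T"
  shows "homeomorphic_map T T (\<lambda>x. inv\<^bsub>G\<^esub> x)"
proof (rule homeomorphic_map_involution)
  show "continuous_map T T (\<lambda>x. inv\<^bsub>G\<^esub> x)"
    using assms unfolding topological_group_def by blast
  show "inv\<^bsub>G\<^esub> (inv\<^bsub>G\<^esub> x) = x" if "x \<in> topspace T" for x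
  proof -
    have "group G" "x \<in> carrier G"
      using assms that unfolding topological_group_def by auto
    then show ?thesis
      by (rule group.inv_inv)
  qed
qed

lemma conj_class_eq_image:
  "conj_class G c = (\<lambda>h. h \<otimes>\<^bsub>G\<^esub> c \<otimes>\<^bsub>G\<^esub> inv\<^bsub>G\<^esub> h) ` carrier G"
  by (auto simp: conj_class_def)

lemma mem_conj_class_iff:
  "x \<in> conj_class G c \<longleftrightarrow> (\<exists>h \<in> carrier G. h \<otimes>\<^bsub>G\<^esub> c \<otimes>\<^bsub>G\<^esub> inv\<^bsub>G\<^esub> h = x)"
  by (auto simp: conj_class_def)

context group
begin

lemma conj_conj_eq:
  assumes "c \<in> carrier G" "h \<in> carrier G" "k \<in> carrier G"
  shows "k \<otimes> (h \<otimes> c \<otimes> inv h) \<otimes> inv k = (k \<otimes> h) \<otimes> c \<otimes> inv (k \<otimes> h)"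
  using assms by (simp add: inv_mult_group m_assoc)

lemma conj_class_conj_subset:
  assumes c: "c \<in> carrier G" and h: "h \<in> carrier G"
  shows "conj_class G (h \<otimes> c \<otimes> inv h) \<subseteq> conj_class G c"
  unfolding conj_class_eq_image
proof (rule image_subsetI)
  fix k assume k: "k \<in> carrier G"
  have "k \<otimes> h \<in> carrier G"
    using h k by simp
  moreover have "k \<otimes> (h \<otimes> c \<otimes> inv h) \<otimes> inv k = (k \<otimes> h) \<otimes> c \<otimes> inv (k \<otimes> h)"
    by (rule conj_conj_eq[OF c h k])
  ultimately show "k \<otimes> (h \<otimes> c \<otimes> inv h) \<otimes> inv k \<in> (\<lambda>h. h \<otimes> c \<otimes> inv h) ` carrier G"
    by (rule rev_image_eqI)
qed

lemma conj_class_eq_of_mem: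
  assumes c: "c \<in> carrier G" and g: "g \<in> conj_class G c"
  shows "conj_class G g = conj_class G c"
proof -
  obtain h where h: "h \<in> carrier G" and gh: "g = h \<otimes> c \<otimes> inv h"
    using g unfolding conj_class_def by blast
  have "inv h \<otimes> g \<otimes> inv (inv h) = c"
    using conj_conj_eq[OF c h inv_closed[OF h]] c h gh by simp
  then have "conj_class G c \<subseteq> conj_class G g"
    using conj_class_conj_subset[of g "inv h"] c h gh by simp
  then show ?thesis
    using conj_class_conj_subset[OF c h] gh by blast
qed

lemma conj_class_eq_of_Int:
  assumes c: "c \<in> carrier G" and d: "d \<in> carrier G"
    and "conj_class G c \<inter> conj_class G d \<noteq> {}"
  shows "conj_class G c = conj_class G d"
proof -
  obtain x where "x \<in> conj_class G c" "x \<in> conj_class G d"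
    using assms(3) by blast
  then show ?thesis
    using conj_class_eq_of_mem[OF c] conj_class_eq_of_mem[OF d] by metis
qed

lemma inv_image_conj_class:
  assumes "c \<in> carrier G"
  shows "(\<lambda>x. inv x) ` conj_class G c = conj_class G (inv c)"
proof -
  have "(\<lambda>x. inv x) ` conj_class G c = (\<lambda>h. inv (h \<otimes> c \<otimes> inv h)) ` carrier G"
    by (simp add: conj_class_eq_image image_image)
  also have "\<dots> = (\<lambda>h. h \<otimes> inv c \<otimes> inv h) ` carrier G"
    using assms by (intro image_cong) (simp_all add: inv_mult_group m_assoc)
  also have "\<dots> = conj_class G (inv c)"
    by (simp add: conj_class_eq_image)
  finally show ?thesis .
qed

end

theorem mainTheorem7:
  fixes G :: "('a, 'b) monoid_scheme" and T :: "'a topology" and c :: 'a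
  assumes "polish_group G T"
    and "c \<in> carrier G"
    and "comeagre_in T (conj_class G c)"
  shows "\<forall>g \<in> conj_class G c. \<exists>h \<in> carrier G. h \<otimes>\<^bsub>G\<^esub> g \<otimes>\<^bsub>G\<^esub> inv\<^bsub>G\<^esub> h = inv\<^bsub>G\<^esub> g"
proof -
  have TG: "topological_group G T" and complete: "completely_metrizable_space T"
    using assms(1) unfolding polish_group_def by auto
  then interpret group G
    unfolding topological_group_def by blast
  have nonempty: "topspace T \<noteq> {}"
    using TG unfolding topological_group_def by auto
  have "comeagre_in T (conj_class G (inv\<^bsub>G\<^esub> c))"
    using comeagre_in_homeomorphic_image[OF topological_group_homeomorphic_map_inv[OF TG] assms(3)]
    by (simp add: inv_image_conj_class assms(2))
  then have "conj_class G c \<inter> conj_class G (inv\<^bsub>G\<^esub> c) \<noteq> {}"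
    by (intro comeagre_in_nonempty[OF complete nonempty] comeagre_in_Int assms(3))
  then have inv_c: "conj_class G c = conj_class G (inv\<^bsub>G\<^esub> c)"
    by (rule conj_class_eq_of_Int[OF assms(2) inv_closed[OF assms(2)]])
  show ?thesis
  proof
    fix g assume g: "g \<in> conj_class G c"
    then have "inv\<^bsub>G\<^esub> g \<in> (\<lambda>x. inv\<^bsub>G\<^esub> x) ` conj_class G c"
      by (rule imageI)
    also have "\<dots> = conj_class G g"
      using inv_image_conj_class[OF assms(2)] inv_c conj_class_eq_of_mem[OF assms(2) g] by simp
    finally show "\<exists>h \<in> carrier G. h \<otimes>\<^bsub>G\<^esub> g \<otimes>\<^bsub>G\<^esub> inv\<^bsub>G\<^esub> h = inv\<^bsub>G\<^esub> g"
      by (simp add: mem_conj_class_iff)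
  qed
qed

end
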